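(* We have $\liminf_{n\to\infty}\deg(\mathscr B:\mathrm{Part}(n)\to\mathrm{Part}(n))\geq 2$. Moreover, for every positive integer $n$, \[\deg(\mathscr B:\mathrm{Part}(n)\to\mathrm{Part}(n))\leq\left\lfloor\frac{1+\sqrt{\tfrac{8}{3}n+1}}{2}\right\rfloor.\]
   Context: For finite sets $X,Y$ and $f:X\to Y$, $\deg(f)=\frac{1}{|X|}\sum_{y\in Y}|f^{-1}(y)|^2$. $\mathrm{Part}(n)$ is the set of partitions of $n$, i.e. tuples $(\lambda_1,\dots,\lambda_\ell)$ of positive integers in nonincreasing order summing to $n$. Bulgarian solitaire $\mathscr B:\mathrm{Part}(n)\to\mathrm{Part}(n)$ sends $\lambda=(\lambda_1,\ldots,\lambda_\ell)$ to the partition obtained by arranging the numbers $\ell,\lambda_1-1,\ldots,\lambda_\ell-1$ in nonincreasing order and deleting any zeros. For example, $\mathscr B(8,3,3,1,1)=(7,5,2,2)$. *)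

theory Defs
  imports "HOL-Analysis.Analysis"
begin

definition map_deg :: "('a \<Rightarrow> 'b) \<Rightarrow> 'a set \<Rightarrow> 'b set \<Rightarrow> real" where
  "map_deg f X Y = (1 / real (card X)) * (\<Sum>y\<in>Y. (real (card {x\<in>X. f x = y}))^2)"

definition Part :: "nat \<Rightarrow> nat list set" where
  "Part n = {xs. sorted (rev xs) \<and> (\<forall>x\<in>set xs. 0 < x) \<and> sum_list xs = n}"

definition bulgarian :: "nat list \<Rightarrow> nat list" where
  "bulgarian xs = filter (\<lambda>x. x \<noteq> 0) (rev (sort (length xs # map (\<lambda>x. x - 1) xs)))"

lemma "bulgarian [8,3,3,1,1] = [7,5,2,2]"
  by (simp add: bulgarian_def)

end

(* Write p(n) for the number of partitions of n. The degree of f is the number of ordered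
   pairs (x, x') with f x = f x', divided by |X|.

   Upper bound: a Bulgarian preimage of N is determined by its length, which is a part v of N
   with v + 1 >= |N|. If N has c distinct such parts, all of them are at least c - 1, so
   3c(c-1)/2 <= n. Hence every fibre, and therefore the degree, is bounded by
   floor((1 + sqrt(8n/3 + 1))/2).

   Lower bound: every partition of n - 3 yields two distinct partitions of n with the same
   image, so there are at least p(n) + 2 p(n - 3) colliding pairs, and it remains to see that
   p(n) <= 2 p(n - 3) for large n. Replacing a part j by j ones shows that partitions of n
   without a part 1 and with at least four distinct parts number at most p(n - 1)/4; those
   with at most three distinct parts number at most (n + 1)^6. So
   4 p(n) <= 5 p(n - 1) + 4 (n + 1)^6, and three steps of this together with
   p(n) >= 2^floor(sqrt n) give the claim. *)

theory Submission
  imports Defs "HOL-Real_Asymp.Real_Asymp"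
begin

section \<open>Degree and collision pairs\<close>

definition collision_pairs :: "('a \<Rightarrow> 'b) \<Rightarrow> 'a set \<Rightarrow> ('a \<times> 'a) set" where
  "collision_pairs f X = {(x, x'). x \<in> X \<and> x' \<in> X \<and> f x = f x'}"

lemma collision_pairs_eq_Sigma: "collision_pairs f X = Sigma X (\<lambda>x. {x' \<in> X. f x' = f x})"
  by (auto simp: collision_pairs_def)

lemma finite_collision_pairs: "finite X \<Longrightarrow> finite (collision_pairs f X)"
  by (simp add: collision_pairs_eq_Sigma)

lemma card_collision_pairs_eq_sum_fibers:
  assumes "finite X" "finite Y" "f ` X \<subseteq> Y"
  shows "card (collision_pairs f X) = (\<Sum>y\<in>Y. card {x \<in> X. f x = y} ^ 2)"
proof -
  let ?F = "\<lambda>y. {x \<in> X. f x = y}"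
  have "collision_pairs f X = (\<Union>y\<in>Y. ?F y \<times> ?F y)"
    using assms(3) by (auto simp: collision_pairs_def)
  also have "card \<dots> = (\<Sum>y\<in>Y. card (?F y \<times> ?F y))"
    by (rule card_UN_disjoint) (use assms(1,2) in auto)
  finally show ?thesis
    by (simp add: card_cartesian_product power2_eq_square)
qed

lemma map_deg_eq_card_collision_pairs:
  assumes "finite X" "finite Y" "f ` X \<subseteq> Y"
  shows "map_deg f X Y = card (collision_pairs f X) / card X"
  by (simp add: map_deg_def card_collision_pairs_eq_sum_fibers[OF assms])

lemma card_collision_pairs_le:
  assumes "finite X" and fiber: "\<And>x. x \<in> X \<Longrightarrow> real (card {x' \<in> X. f x' = f x}) \<le> D"
  shows "real (card (collision_pairs f X)) \<le> D * card X"
proof -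
  have "real (card (collision_pairs f X)) = (\<Sum>x\<in>X. real (card {x' \<in> X. f x' = f x}))"
    using assms(1) by (simp add: collision_pairs_eq_Sigma card_SigmaI)
  also have "\<dots> \<le> (\<Sum>x\<in>X. D)"
    by (rule sum_mono) (rule fiber)
  finally show ?thesis
    by (simp add: mult.commute)
qed

lemma card_collision_pairs_ge:
  fixes \<mu> :: "'a \<Rightarrow> 'c::linorder"
  assumes "finite X" "inj_on g Z" "g ` Z \<subseteq> collision_pairs f X"
    and increasing: "\<And>z. z \<in> Z \<Longrightarrow> \<mu> (fst (g z)) < \<mu> (snd (g z))"
  shows "card X + 2 * card Z \<le> card (collision_pairs f X)"
proof -
  let ?D = "(\<lambda>x. (x, x)) ` X" and ?A = "g ` Z" and ?B = "prod.swap ` g ` Z"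
  have finite: "finite ?D" "finite ?A" "finite ?B"
    using assms(1,3) finite_collision_pairs finite_subset by blast+
  have "(x, x) \<notin> ?A" for x
    using increasing by (metis fst_conv snd_conv imageE less_irrefl)
  moreover have "p \<notin> ?A \<and> (\<forall>x. p \<noteq> (x, x))" if "p \<in> ?B" for p
    using that increasing by (auto simp: image_iff)
      (metis fst_swap snd_swap less_asym, metis fst_conv snd_conv fst_swap snd_swap less_asym)
  ultimately have disjoint: "?D \<inter> ?A = {}" "(?D \<union> ?A) \<inter> ?B = {}"
    by blast+
  have "card ?B = card ?A"
    by (simp add: card_image)
  then have "card X + 2 * card Z = card ?D + card ?A + card ?B"
    using assms(2) by (simp add: card_image inj_on_def)
  also have "\<dots> = card (?D \<union> ?A \<union> ?B)"
    using finite disjoint by (simp add: card_Un_disjoint)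
  also have "\<dots> \<le> card (collision_pairs f X)"
    by (rule card_mono[OF finite_collision_pairs[OF assms(1)]])
      (use assms(3) in \<open>auto simp: collision_pairs_def\<close>)
  finally show ?thesis .
qed

lemma card_collision_pairs_bij_betw:
  assumes "bij_betw h X X'" and "\<And>x y. x \<in> X \<Longrightarrow> y \<in> X \<Longrightarrow> f x = f y \<longleftrightarrow> g (h x) = g (h y)"
  shows "card (collision_pairs f X) = card (collision_pairs g X')"
proof -
  have "inj_on (map_prod h h) (collision_pairs f X)"
    by (rule inj_on_subset[OF map_prod_inj_on])
      (use assms(1) in \<open>auto simp: bij_betw_def collision_pairs_def\<close>)
  moreover have "map_prod h h ` collision_pairs f X = collision_pairs g X'"
  proof
    show "map_prod h h ` collision_pairs f X \<subseteq> collision_pairs g X'"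
      using assms bij_betwE by (fastforce simp: collision_pairs_def)
    show "collision_pairs g X' \<subseteq> map_prod h h ` collision_pairs f X"
    proof clarify
      fix x' y' assume xy: "(x', y') \<in> collision_pairs g X'"
      then obtain x y where "x \<in> X" "y \<in> X" "x' = h x" "y' = h y"
        using assms(1) unfolding collision_pairs_def bij_betw_def by blast
      then show "(x', y') \<in> map_prod h h ` collision_pairs f X"
        using xy assms(2) by (force simp: collision_pairs_def)
    qed
  qed
  ultimately show ?thesis
    by (metis card_image)
qed

section \<open>Partitions as multisets\<close>

definition mset_partitions :: "nat \<Rightarrow> nat multiset set" where
  "mset_partitions n = {M. (\<forall>x\<in>#M. 0 < x) \<and> sum_mset M = n}"

lemma replicate_one_in_mset_partitions: "replicate_mset n 1 \<in> mset_partitions n"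
  by (simp add: mset_partitions_def sum_mset_replicate_mset)

lemma rev_sort_eq: "sorted (rev xs) \<Longrightarrow> rev (sort xs) = xs"
  by (metis properties_for_sort mset_rev rev_rev_ident)

lemma rev_sorted_list_of_multiset_in_Part:
  "M \<in> mset_partitions n \<Longrightarrow> rev (sorted_list_of_multiset M) \<in> Part n"
  by (auto simp: mset_partitions_def Part_def sum_mset_sum_list[symmetric])

lemma bij_betw_mset_Part: "bij_betw mset (Part n) (mset_partitions n)"
proof (rule bij_betwI[where g = "\<lambda>M. rev (sorted_list_of_multiset M)"])
  show "mset \<in> Part n \<rightarrow> mset_partitions n"
    by (auto simp: Part_def mset_partitions_def sum_mset_sum_list)
  show "(\<lambda>M. rev (sorted_list_of_multiset M)) \<in> mset_partitions n \<rightarrow> Part n"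
    using rev_sorted_list_of_multiset_in_Part by blast
qed (auto simp: Part_def rev_sort_eq)

lemma length_le_sum_list: "(\<forall>x\<in>set xs. 0 < x) \<Longrightarrow> length xs \<le> sum_list (xs :: nat list)"
  by (induction xs) (auto simp: Suc_le_eq)

lemma finite_Part: "finite (Part n)"
proof (rule finite_subset)
  show "Part n \<subseteq> {xs. set xs \<subseteq> {0..n} \<and> length xs \<le> n}"
    using length_le_sum_list member_le_sum_list by (fastforce simp: Part_def)
qed (rule finite_lists_length_le[OF finite_atLeastAtMost])

lemma finite_mset_partitions: "finite (mset_partitions n)"
  using bij_betw_finite[OF bij_betw_mset_Part] finite_Part by blast

lemma card_mset_partitions_pos: "0 < card (mset_partitions n)"
  using finite_mset_partitions replicate_one_in_mset_partitions card_gt_0_iff by blast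

definition bulgarian_mset :: "nat multiset \<Rightarrow> nat multiset" where
  "bulgarian_mset M = filter_mset (\<lambda>x. x \<noteq> 0) (add_mset (size M) (image_mset (\<lambda>x. x - 1) M))"

lemma bulgarian_eq_bulgarian_mset:
  "bulgarian xs = rev (sorted_list_of_multiset (bulgarian_mset (mset xs)))"
proof -
  have "bulgarian_mset (mset xs) = mset (filter (\<lambda>x. x \<noteq> 0) (length xs # map (\<lambda>x. x - 1) xs))"
    by (simp add: bulgarian_mset_def)
  then show ?thesis
    by (simp only: bulgarian_def sorted_list_of_multiset_mset filter_sort[symmetric] rev_filter)
qed

definition decrement :: "nat multiset \<Rightarrow> nat multiset" where
  "decrement M = image_mset (\<lambda>x. x - 1) (filter_mset (\<lambda>x. 2 \<le> x) M)"

lemma decrement_empty [simp]: "decrement {#} = {#}"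
  by (simp add: decrement_def)

lemma decrement_add_mset [simp]:
  "decrement (add_mset x M) = (if 2 \<le> x then add_mset (x - 1) (decrement M) else decrement M)"
  by (simp add: decrement_def)

lemma decrement_union [simp]: "decrement (M + M') = decrement M + decrement M'"
  by (simp add: decrement_def)

lemma decrement_replicate_mset [simp]:
  "decrement (replicate_mset k x) = (if 2 \<le> x then replicate_mset k (x - 1) else {#})"
  by (induction k) auto

lemma size_decrement: "size (decrement M) = size (filter_mset (\<lambda>x. 2 \<le> x) M)"
  by (simp add: decrement_def)

lemma in_decrement_pos: "x \<in># decrement M \<Longrightarrow> 0 < x"
  by (auto simp: decrement_def)

lemma filter_mset_ge_Suc:
  "filter_mset (\<lambda>x. k \<le> x) M = filter_mset (\<lambda>x. Suc k \<le> x) M + replicate_mset (count M k) (k :: nat)"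
  by (rule multiset_eqI) auto

lemma positive_mset_split:
  assumes "\<forall>x\<in>#M. 0 < x"
  shows "M = filter_mset (\<lambda>x. 2 \<le> x) M + replicate_mset (count M 1) (1 :: nat)"
proof -
  have "M = filter_mset (\<lambda>x. 1 \<le> x) M"
    using assms by (induction M) auto
  also have "\<dots> = filter_mset (\<lambda>x. Suc 1 \<le> x) M + replicate_mset (count M 1) 1"
    by (rule filter_mset_ge_Suc)
  finally show ?thesis
    by (simp only: Suc_1)
qed

lemma size_decrement_add_ones: "\<forall>x\<in>#M. 0 < x \<Longrightarrow> size M = size (decrement M) + count M 1"
  using arg_cong[OF positive_mset_split, of M size] by (simp add: size_decrement)

lemma sum_mset_decrement:
  "\<forall>x\<in>#M. 0 < x \<Longrightarrow> sum_mset (decrement M) + size M = sum_mset M"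
  by (induction M) auto

lemma decrement_inj_on_size:
  assumes pos: "\<forall>x\<in>#M. 0 < x" "\<forall>x\<in>#M'. 0 < x"
    and size: "size M = size M'" and eq: "decrement M = decrement M'"
  shows "M = M'"
proof -
  let ?big = "filter_mset (\<lambda>x. 2 \<le> x)"
  have big: "?big M = ?big M'"
    using eq unfolding decrement_def by (rule multiset.inj_map_strong[rotated]) auto
  have ones: "count M 1 = count M' 1"
    using size_decrement_add_ones[OF pos(1)] size_decrement_add_ones[OF pos(2)] size eq by simp
  have "M = ?big M + replicate_mset (count M 1) 1"
    by (rule positive_mset_split[OF pos(1)])
  also have "\<dots> = ?big M' + replicate_mset (count M' 1) 1"
    by (simp only: big ones)
  also have "\<dots> = M'"
    by (rule positive_mset_split[OF pos(2), symmetric])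
  finally show ?thesis .
qed

lemma bulgarian_mset_eq:
  assumes "M \<noteq> {#}"
  shows "bulgarian_mset M = add_mset (size M) (decrement M)"
proof -
  have "filter_mset (\<lambda>x. x \<noteq> 0) (image_mset (\<lambda>x. x - 1) M) = decrement M"
    by (induction M) auto
  then show ?thesis
    using assms by (simp add: bulgarian_mset_def)
qed

lemma bulgarian_mset_in_mset_partitions:
  assumes "M \<in> mset_partitions n"
  shows "bulgarian_mset M \<in> mset_partitions n"
proof (cases "M = {#}")
  case False
  then show ?thesis
    using assms sum_mset_decrement[of M] in_decrement_pos
    by (auto simp: mset_partitions_def bulgarian_mset_eq nonempty_has_size)
qed (use assms in \<open>simp add: bulgarian_mset_def\<close>)

lemma map_deg_bulgarian_eq:
  "map_deg bulgarian (Part n) (Part n)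
     = card (collision_pairs bulgarian_mset (mset_partitions n)) / card (mset_partitions n)"
proof -
  have "bulgarian ` Part n \<subseteq> Part n"
    using bij_betw_mset_Part bulgarian_mset_in_mset_partitions rev_sorted_list_of_multiset_in_Part
    by (fastforce simp: bulgarian_eq_bulgarian_mset bij_betw_def)
  then have "map_deg bulgarian (Part n) (Part n) = card (collision_pairs bulgarian (Part n)) / card (Part n)"
    by (simp add: map_deg_eq_card_collision_pairs finite_Part)
  moreover have "card (collision_pairs bulgarian (Part n))
      = card (collision_pairs bulgarian_mset (mset_partitions n))"
    by (rule card_collision_pairs_bij_betw[OF bij_betw_mset_Part])
      (metis bulgarian_eq_bulgarian_mset mset_rev mset_sorted_list_of_multiset)
  ultimately show ?thesis
    using bij_betw_same_card[OF bij_betw_mset_Part] by simp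
qed

section \<open>The upper bound\<close>

lemma bulgarian_mset_inj_on_size:
  assumes "\<forall>x\<in>#M. 0 < x" "\<forall>x\<in>#M'. 0 < x" "size M = size M'"
    and "bulgarian_mset M = bulgarian_mset M'"
  shows "M = M'"
proof (cases "M = {#}")
  case False
  then have "M' \<noteq> {#}"
    using assms(3) by auto
  then have "decrement M = decrement M'"
    using assms(3,4) False by (simp add: bulgarian_mset_eq)
  then show ?thesis
    by (rule decrement_inj_on_size[OF assms(1-3)])
qed (use assms(3) in simp)

definition preimage_lengths :: "nat multiset \<Rightarrow> nat set" where
  "preimage_lengths N = {v \<in> set_mset N. size N \<le> v + 1}"

lemma card_bulgarian_mset_fiber_le:
  assumes "1 \<le> n"
  shows "card {M \<in> mset_partitions n. bulgarian_mset M = N} \<le> card (preimage_lengths N)"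
proof (rule card_inj_on_le[where f = size])
  show "inj_on size {M \<in> mset_partitions n. bulgarian_mset M = N}"
  proof (rule inj_onI)
    fix M M' assume "M \<in> {M \<in> mset_partitions n. bulgarian_mset M = N}"
      "M' \<in> {M \<in> mset_partitions n. bulgarian_mset M = N}" "size M = size M'"
    then show "M = M'"
      using bulgarian_mset_inj_on_size[of M M'] by (simp add: mset_partitions_def)
  qed
  show "size ` {M \<in> mset_partitions n. bulgarian_mset M = N} \<subseteq> preimage_lengths N"
    unfolding preimage_lengths_def
  proof clarify
    fix M assume M: "M \<in> mset_partitions n" "N = bulgarian_mset M"
    then have "M \<noteq> {#}"
      using assms by (auto simp: mset_partitions_def)
    moreover have "size (decrement M) \<le> size M"
      by (simp add: size_decrement)
    ultimately show "size M \<in># bulgarian_mset M \<and> size (bulgarian_mset M) \<le> size M + 1"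
      by (simp add: bulgarian_mset_eq)
  qed
qed (simp add: preimage_lengths_def)

lemma card_mult_le_sum_distinct:
  fixes T :: "nat set"
  assumes "finite T" "\<forall>v\<in>T. m \<le> v"
  shows "card T * (2 * m + card T - 1) \<le> 2 * \<Sum>T"
  using assms
proof (induction "card T" arbitrary: T)
  case (Suc c)
  define M where "M = Max T"
  have "T \<noteq> {}"
    using Suc.hyps(2) by auto
  then have "M \<in> T"
    using Max_in[OF Suc.prems(1)] M_def by simp
  then have card: "card (T - {M}) = c" and sum: "\<Sum>T = M + \<Sum>(T - {M})"
    using Suc.hyps(2) Suc.prems(1) by (simp_all add: sum.remove)
  have IH: "c * (2 * m + c - 1) \<le> 2 * \<Sum>(T - {M})"
    using Suc.hyps(1)[of "T - {M}"] card Suc.prems by auto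
  have "T \<subseteq> {m..M}"
    using Suc.prems M_def by auto
  then have "card T \<le> card {m..M}"
    by (rule card_mono[rotated]) simp
  then have "m + c \<le> M"
    using Suc.hyps(2) by simp
  have "card T = Suc c"
    using Suc.hyps(2) by simp
  then have "card T * (2 * m + card T - 1) = 2 * (m + c) + c * (2 * m + c - 1)"
    by (cases c) (simp_all add: algebra_simps)
  also have "\<dots> \<le> 2 * M + 2 * \<Sum>(T - {M})"
    using \<open>m + c \<le> M\<close> IH by (intro add_mono) simp_all
  finally show ?case
    using sum by simp
qed simp

lemma sum_set_mset_le_sum_mset: "\<Sum>(set_mset M) \<le> sum_mset (M :: nat multiset)"
proof -
  have "\<Sum>(set_mset M) = sum_mset (mset_set (set_mset M))"
    by (simp add: sum_unfold_sum_mset)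
  also have "\<dots> \<le> sum_mset M"
    using mset_set_set_mset_msubset[of M] by (metis le_add1 subset_mset.add_diff_inverse sum_mset.union)
  finally show ?thesis .
qed

lemma card_preimage_lengths_bound:
  assumes "N \<in> mset_partitions n"
  defines "c \<equiv> card (preimage_lengths N)"
  shows "3 * c * (c - 1) \<le> 2 * n"
proof -
  let ?T = "preimage_lengths N"
  have "c \<le> card (set_mset N)"
    unfolding c_def preimage_lengths_def by (rule card_mono) auto
  also have "\<dots> \<le> size N"
    by (metis size_mset_set size_mset_mono mset_set_set_mset_msubset)
  finally have "\<forall>v\<in>?T. c - 1 \<le> v"
    by (auto simp: preimage_lengths_def)
  then have "c * (2 * (c - 1) + c - 1) \<le> 2 * \<Sum>?T"
    using card_mult_le_sum_distinct[of ?T] unfolding c_def by (simp add: preimage_lengths_def)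
  also have "\<Sum>?T \<le> \<Sum>(set_mset N)"
    unfolding preimage_lengths_def by (rule sum_mono2) auto
  also have "\<dots> \<le> n"
    using sum_set_mset_le_sum_mset[of N] assms(1) by (simp add: mset_partitions_def)
  finally show ?thesis
    by (cases c) (simp_all add: algebra_simps)
qed

lemma le_floor_quadratic_root:
  fixes c n :: nat
  assumes "3 * c * (c - 1) \<le> 2 * n"
  shows "real c \<le> of_int \<lfloor>(1 + sqrt (8 / 3 * real n + 1)) / 2\<rfloor>"
proof (cases "c = 0")
  case False
  have "real (3 * c * (c - 1)) \<le> real (2 * n)"
    using assms by linarith
  then have "3 * real c * (real c - 1) \<le> 2 * real n"
    using False by (simp add: of_nat_diff)
  then have "(2 * real c - 1)\<^sup>2 \<le> 8 / 3 * real n + 1"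
    by (simp add: power2_eq_square algebra_simps)
  then have "2 * real c - 1 \<le> sqrt (8 / 3 * real n + 1)"
    by (rule real_le_rsqrt)
  then have "of_int (int c) \<le> (1 + sqrt (8 / 3 * real n + 1)) / 2"
    by simp
  then have "int c \<le> \<lfloor>(1 + sqrt (8 / 3 * real n + 1)) / 2\<rfloor>"
    by (simp only: le_floor_iff)
  then have "(of_int (int c) :: real) \<le> of_int \<lfloor>(1 + sqrt (8 / 3 * real n + 1)) / 2\<rfloor>"
    by (simp only: of_int_le_iff)
  then show ?thesis
    by simp
qed simp

lemma map_deg_bulgarian_le:
  assumes "1 \<le> n"
  shows "map_deg bulgarian (Part n) (Part n) \<le> of_int \<lfloor>(1 + sqrt (8 / 3 * real n + 1)) / 2\<rfloor>"
proof -
  define D :: real where "D = of_int \<lfloor>(1 + sqrt (8 / 3 * real n + 1)) / 2\<rfloor>"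
  have "real (card (collision_pairs bulgarian_mset (mset_partitions n)))
      \<le> D * card (mset_partitions n)"
  proof (rule card_collision_pairs_le[OF finite_mset_partitions])
    fix M assume "M \<in> mset_partitions n"
    then have N: "bulgarian_mset M \<in> mset_partitions n"
      by (rule bulgarian_mset_in_mset_partitions)
    let ?c = "card (preimage_lengths (bulgarian_mset M))"
    have "card {M' \<in> mset_partitions n. bulgarian_mset M' = bulgarian_mset M} \<le> ?c"
      by (rule card_bulgarian_mset_fiber_le[OF assms])
    moreover have "real ?c \<le> D"
      unfolding D_def by (rule le_floor_quadratic_root[OF card_preimage_lengths_bound[OF N]])
    ultimately show "real (card {M' \<in> mset_partitions n. bulgarian_mset M' = bulgarian_mset M}) \<le> D"
      by linarith
  qed
  with card_mset_partitions_pos[of n] show ?thesis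
    unfolding map_deg_bulgarian_eq D_def[symmetric] by (simp add: divide_le_eq)
qed

section \<open>The lower bound\<close>

(* Both arise from N = {size (decrement r) + 1, size r + 2} + decrement (decrement r) by the
   inverse move: delete a part v of N, add one to every other part and pad with ones up to
   length v (here v = size (decrement r) + 1, resp. v = size r + 2). *)
definition twin_short :: "nat multiset \<Rightarrow> nat multiset" where
  "twin_short r = add_mset (size r + 3) (decrement r)"

definition twin_long :: "nat multiset \<Rightarrow> nat multiset" where
  "twin_long r = add_mset (size (decrement r) + 2) (decrement r + replicate_mset (count r 1 + 1) 1)"

lemma twins_in_mset_partitions:
  assumes "r \<in> mset_partitions m"
  shows "twin_short r \<in> mset_partitions (m + 3)" "twin_long r \<in> mset_partitions (m + 3)"
proof -
  have pos: "\<forall>x\<in>#r. 0 < x" and sum: "sum_mset (decrement r) + size r = m"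
    using assms sum_mset_decrement[of r] by (auto simp: mset_partitions_def)
  show "twin_short r \<in> mset_partitions (m + 3)"
    using sum in_decrement_pos by (auto simp: mset_partitions_def twin_short_def)
  show "twin_long r \<in> mset_partitions (m + 3)"
    using sum size_decrement_add_ones[OF pos] in_decrement_pos
    by (auto simp: mset_partitions_def twin_long_def)
qed

lemma size_twin_short_less_long: "size (twin_short r) < size (twin_long r)"
  by (simp add: twin_short_def twin_long_def)

lemma bulgarian_mset_twin_short_eq_long:
  assumes "\<forall>x\<in>#r. 0 < x"
  shows "bulgarian_mset (twin_short r) = bulgarian_mset (twin_long r)"
proof -
  have "size (twin_long r) = size r + 2"
    using size_decrement_add_ones[OF assms] by (simp add: twin_long_def)
  then show ?thesis
    by (simp add: bulgarian_mset_eq twin_short_def twin_long_def add_mset_commute)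
qed

lemma twins_inj:
  assumes "\<forall>x\<in>#r. 0 < x" "\<forall>x\<in>#r'. 0 < x"
    and "twin_short r = twin_short r'" "twin_long r = twin_long r'"
  shows "r = r'"
proof -
  have "size r = size r'"
    using arg_cong[OF assms(4), of size] size_decrement_add_ones[OF assms(1)] size_decrement_add_ones[OF assms(2)]
    by (simp add: twin_long_def)
  moreover from this have "decrement r = decrement r'"
    using assms(3) by (simp add: twin_short_def)
  ultimately show ?thesis
    using assms(1,2) decrement_inj_on_size by blast
qed

lemma card_collision_pairs_bulgarian_mset_ge:
  assumes "3 \<le> n"
  shows "card (mset_partitions n) + 2 * card (mset_partitions (n - 3))
    \<le> card (collision_pairs bulgarian_mset (mset_partitions n))"
proof (rule card_collision_pairs_ge[where \<mu> = size and g = "\<lambda>r. (twin_short r, twin_long r)"])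
  show "inj_on (\<lambda>r. (twin_short r, twin_long r)) (mset_partitions (n - 3))"
    using twins_inj by (auto simp: inj_on_def mset_partitions_def)
  show "(\<lambda>r. (twin_short r, twin_long r)) ` mset_partitions (n - 3)
      \<subseteq> collision_pairs bulgarian_mset (mset_partitions n)"
  proof clarify
    fix r assume r: "r \<in> mset_partitions (n - 3)"
    then have "bulgarian_mset (twin_short r) = bulgarian_mset (twin_long r)"
      by (intro bulgarian_mset_twin_short_eq_long) (simp add: mset_partitions_def)
    then show "(twin_short r, twin_long r) \<in> collision_pairs bulgarian_mset (mset_partitions n)"
      using twins_in_mset_partitions[OF r] assms by (simp add: collision_pairs_def)
  qed
qed (simp_all add: finite_mset_partitions size_twin_short_less_long)

section \<open>Growth of the partition function\<close>

lemma card_mset_partitions_with_one: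
  assumes "1 \<le> n"
  shows "card {M \<in> mset_partitions n. 1 \<in># M} = card (mset_partitions (n - 1))"
proof -
  have "bij_betw (add_mset 1) (mset_partitions (n - 1)) {M \<in> mset_partitions n. 1 \<in># M}"
  proof (rule bij_betwI[where g = "\<lambda>M. M - {#1#}"])
    show "add_mset 1 \<in> mset_partitions (n - 1) \<rightarrow> {M \<in> mset_partitions n. 1 \<in># M}"
      using assms by (auto simp: mset_partitions_def)
    show "(\<lambda>M. M - {#1#}) \<in> {M \<in> mset_partitions n. 1 \<in># M} \<rightarrow> mset_partitions (n - 1)"
    proof
      fix M assume "M \<in> {M \<in> mset_partitions n. 1 \<in># M}"
      then have "1 \<in># M" "\<forall>x\<in>#M. 0 < x" "sum_mset M = n"
        by (auto simp: mset_partitions_def)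
      then show "M - {#1#} \<in> mset_partitions (n - 1)"
        using sum_mset.remove[of 1 M] by (auto simp: mset_partitions_def dest: in_diffD)
    qed
  qed auto
  then show ?thesis
    by (simp add: bij_betw_same_card)
qed

lemma sum_card_set_mset_without_one_le:
  assumes "1 \<le> n"
  shows "(\<Sum>M \<in> {M \<in> mset_partitions n. 1 \<notin># M}. card (set_mset M)) \<le> card (mset_partitions (n - 1))"
proof -
  define S where "S = Sigma {M \<in> mset_partitions n. 1 \<notin># M} set_mset"
  \<comment> \<open>Replacing a part \<open>j\<close> by \<open>j\<close> ones is injective on pairs \<open>(M, j)\<close>: \<open>j\<close> is recovered as the number of ones.\<close>
  define \<Phi> where "\<Phi> = (\<lambda>(M, j). M - {#j#} + replicate_mset j (1 :: nat))"
  have S: "M \<in> mset_partitions n" "1 \<notin># M" "j \<in># M" if "(M, j) \<in> S" for M j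
    using that by (auto simp: S_def)
  have "\<Phi> ` S \<subseteq> {M \<in> mset_partitions n. 1 \<in># M}"
  proof clarify
    fix M j assume "(M, j) \<in> S"
    note S = S[OF this]
    have "0 < j" "j \<noteq> 1"
      using S by (auto simp: mset_partitions_def)
    then have "1 \<in># \<Phi> (M, j)"
      by (simp add: \<Phi>_def)
    moreover have "sum_mset (\<Phi> (M, j)) = sum_mset (M - {#j#}) + j"
      by (simp only: \<Phi>_def case_prod_conv sum_mset.union sum_mset_replicate_mset) simp
    then have "sum_mset (\<Phi> (M, j)) = n"
      using sum_mset.remove[OF S(3)] S(1) by (simp add: mset_partitions_def)
    moreover have "\<forall>x\<in>#\<Phi> (M, j). 0 < x"
      using S(1) by (auto simp: \<Phi>_def mset_partitions_def dest: in_diffD)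
    ultimately show "\<Phi> (M, j) \<in> mset_partitions n \<and> 1 \<in># \<Phi> (M, j)"
      by (simp add: mset_partitions_def)
  qed
  moreover have "inj_on \<Phi> S"
  proof (rule inj_onI, clarify)
    fix M j M' j' assume in_S: "(M, j) \<in> S" "(M', j') \<in> S" and eq: "\<Phi> (M, j) = \<Phi> (M', j')"
    have "count (\<Phi> (M, j)) 1 = j" "count (\<Phi> (M', j')) 1 = j'"
      using S[OF in_S(1)] S[OF in_S(2)] by (auto simp: \<Phi>_def count_eq_zero_iff dest: in_diffD)
    then have "j = j'"
      using eq by simp
    then have "M - {#j#} = M' - {#j#}"
      using eq by (simp add: \<Phi>_def)
    then have "M = M'"
      using S[OF in_S(1)] S[OF in_S(2)] \<open>j = j'\<close> by (metis insert_DiffM)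
    then show "M = M' \<and> j = j'"
      using \<open>j = j'\<close> by simp
  qed
  ultimately have "card S \<le> card {M \<in> mset_partitions n. 1 \<in># M}"
    by (intro card_inj_on_le) (simp_all add: finite_mset_partitions)
  moreover have "card S = (\<Sum>M \<in> {M \<in> mset_partitions n. 1 \<notin># M}. card (set_mset M))"
    unfolding S_def by (rule card_SigmaI) (simp_all add: finite_mset_partitions)
  ultimately show ?thesis
    using card_mset_partitions_with_one[OF assms] by simp
qed

lemma sum_replicate_count: "(\<Sum>v\<in>set_mset M. replicate_mset (count M v) v) = M"
proof (rule multiset_eqI)
  fix x
  have "count (\<Sum>v\<in>set_mset M. replicate_mset (count M v) v) x
      = (\<Sum>v\<in>set_mset M. if v = x then count M v else 0)"
    by (simp add: count_sum)
  also have "\<dots> = count M x"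
    by (simp add: sum.delta' count_eq_zero_iff)
  finally show "count (\<Sum>v\<in>set_mset M. replicate_mset (count M v) v) x = count M x" .
qed

lemma card_few_distinct_parts_le: "card {M \<in> mset_partitions n. card (set_mset M) \<le> 3} \<le> (n + 1) ^ 6"
proof -
  \<comment> \<open>Such a partition is encoded by three (value, multiplicity) pairs, padded with \<open>(0, 0)\<close>.\<close>
  define G where "G = (\<lambda>ps. sum_list (map (\<lambda>(v, c). replicate_mset c v) ps) :: nat multiset)"
  define A where "A = {ps. set ps \<subseteq> {0..n} \<times> {0..n} \<and> length ps = 3}"
  have "card A = ((n + 1) ^ 2) ^ 3"
    unfolding A_def by (simp add: card_lists_length_eq card_cartesian_product power2_eq_square)
  then have card_A: "card A = (n + 1) ^ 6"
    by (simp flip: power_mult)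
  have "{M \<in> mset_partitions n. card (set_mset M) \<le> 3} \<subseteq> G ` A"
  proof clarify
    fix M assume M: "M \<in> mset_partitions n" "card (set_mset M) \<le> 3"
    have "size M \<le> n"
      using M(1) sum_mset_decrement[of M] by (auto simp: mset_partitions_def)
    define vs where "vs = sorted_list_of_set (set_mset M)"
    define ps where "ps = map (\<lambda>v. (v, count M v)) vs @ replicate (3 - length vs) (0, 0)"
    have "sum_list (replicate k ({#} :: nat multiset)) = {#}" for k
      by (induction k) auto
    then have "G ps = (\<Sum>v\<in>set_mset M. replicate_mset (count M v) v)"
      by (simp add: G_def ps_def vs_def comp_def sum_list_distinct_conv_sum_set)
    then have "G ps = M"
      by (simp only: sum_replicate_count)
    moreover have "set ps \<subseteq> {0..n} \<times> {0..n}"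
    proof
      fix p assume "p \<in> set ps"
      then consider v where "v \<in># M" "p = (v, count M v)" | "p = (0, 0)"
        by (auto simp: ps_def vs_def split: if_splits)
      then show "p \<in> {0..n} \<times> {0..n}"
      proof cases
        case 1
        then have "v \<le> n"
          using M(1) sum_mset.remove[of v M] by (simp add: mset_partitions_def)
        moreover have "count M v \<le> n"
          using count_le_size[of M v] \<open>size M \<le> n\<close> by linarith
        ultimately show ?thesis
          using 1 by simp
      qed simp
    qed
    moreover have "length ps = 3"
      using M(2) by (simp add: ps_def vs_def)
    ultimately show "M \<in> G ` A"
      unfolding A_def by blast
  qed
  then have "card {M \<in> mset_partitions n. card (set_mset M) \<le> 3} \<le> card (G ` A)"
    by (rule card_mono[rotated]) (simp add: A_def finite_lists_length_eq)
  also have "\<dots> \<le> card A"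
    by (rule card_image_le) (simp add: A_def finite_lists_length_eq)
  finally show ?thesis
    using card_A by simp
qed

lemma card_mset_partitions_recurrence:
  assumes "1 \<le> n"
  shows "4 * card (mset_partitions n) \<le> 5 * card (mset_partitions (n - 1)) + 4 * (n + 1) ^ 6"
proof -
  let ?Q = "{M \<in> mset_partitions n. 1 \<notin># M}"
  let ?few = "{M \<in> mset_partitions n. card (set_mset M) \<le> 3}"
  have finite: "finite ?Q" "finite ?few"
    by (simp_all add: finite_mset_partitions)
  have "4 * card ?Q = (\<Sum>M\<in>?Q. 4)"
    by simp
  also have "\<dots> \<le> (\<Sum>M\<in>?Q. card (set_mset M) + (if card (set_mset M) \<le> 3 then 4 else 0))"
    by (rule sum_mono) auto
  also have "\<dots> = (\<Sum>M\<in>?Q. card (set_mset M)) + 4 * card {M \<in> ?Q. card (set_mset M) \<le> 3}"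
    using finite by (simp add: sum.distrib sum.If_cases Int_def)
  also have "card {M \<in> ?Q. card (set_mset M) \<le> 3} \<le> card ?few"
    using finite by (intro card_mono) auto
  finally have "4 * card ?Q \<le> card (mset_partitions (n - 1)) + 4 * (n + 1) ^ 6"
    using sum_card_set_mset_without_one_le[OF assms] card_few_distinct_parts_le[of n] by linarith
  moreover have "card (mset_partitions n) = card ?Q + card {M \<in> mset_partitions n. 1 \<in># M}"
    by (subst card_Un_disjoint[symmetric]) (auto simp: finite_mset_partitions intro: arg_cong[where f = card])
  ultimately show ?thesis
    using card_mset_partitions_with_one[OF assms] by linarith
qed

lemma two_power_le_card_mset_partitions:
  assumes "m * (m + 3) \<le> 2 * n"
  shows "2 ^ m \<le> card (mset_partitions n)"
proof -
  define I where "I = {2..<m + 2}"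
  define g where "g = (\<lambda>S. mset_set S + replicate_mset (n - \<Sum>S) (1 :: nat))"
  have "2 * \<Sum>I = m * (m + 3)"
    unfolding I_def by (induction m) (simp_all add: algebra_simps)
  then have sum_I: "\<Sum>I \<le> n"
    using assms by linarith
  have "g ` Pow I \<subseteq> mset_partitions n"
  proof clarify
    fix S assume "S \<subseteq> I"
    then have "finite S" "\<forall>x\<in>S. 2 \<le> x"
      by (auto simp: I_def finite_subset)
    moreover have "\<Sum>S \<le> \<Sum>I"
      by (rule sum_mono2) (use \<open>S \<subseteq> I\<close> in \<open>auto simp: I_def\<close>)
    moreover have "sum_mset (mset_set S) = \<Sum>S"
      by (simp add: sum_unfold_sum_mset)
    ultimately show "g S \<in> mset_partitions n"
      using sum_I by (auto simp: g_def mset_partitions_def)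
  qed
  moreover have "inj_on g (Pow I)"
  proof (rule inj_onI)
    fix S S' assume "S \<in> Pow I" "S' \<in> Pow I" "g S = g S'"
    moreover have "set_mset (filter_mset (\<lambda>x. 2 \<le> x) (g S)) = S" if "S \<in> Pow I" for S
      using that finite_subset[of S I] by (auto simp: g_def I_def)
    ultimately show "S = S'"
      by metis
  qed
  ultimately have "card (Pow I) \<le> card (mset_partitions n)"
    by (intro card_inj_on_le) (simp_all add: finite_mset_partitions)
  then show ?thesis
    by (simp add: I_def card_Pow)
qed

lemma eventually_poly_le_card_mset_partitions:
  "\<forall>\<^sub>F n in sequentially. 488 * (n + 1) ^ 6 \<le> 3 * card (mset_partitions n)"
proof -
  have "\<forall>\<^sub>F n in sequentially. 488 * (real n + 1) ^ 6 \<le> 3 * 2 powr (sqrt (real n) - 1)"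
    by real_asymp
  then show ?thesis
    using eventually_ge_at_top[of 9]
  proof eventually_elim
    case (elim n)
    define s where "s = sqrt (real n)"
    define m where "m = nat \<lfloor>s\<rfloor>"
    have "3 \<le> s"
      using elim(2) real_sqrt_le_mono[of 9 "real n"] by (simp add: s_def)
    then have m: "real m \<le> s" "s - 1 \<le> real m"
      by (simp_all add: m_def)
    have "real m * (real m + 3) \<le> s * (s + 3)"
      using m(1) \<open>3 \<le> s\<close> by (intro mult_mono) auto
    also have "\<dots> \<le> 2 * (s * s)"
      using \<open>3 \<le> s\<close> by (simp add: algebra_simps)
    finally have "real (m * (m + 3)) \<le> real (2 * n)"
      by (simp add: s_def)
    then have "m * (m + 3) \<le> 2 * n"
      by (simp only: of_nat_le_iff)
    then have "2 ^ m \<le> card (mset_partitions n)"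
      by (rule two_power_le_card_mset_partitions)
    then have "(2 :: real) ^ m \<le> card (mset_partitions n)"
      by (simp only: numeral_power_le_of_nat_cancel_iff)
    moreover have "2 powr (s - 1) \<le> 2 ^ m"
      using powr_mono[OF m(2), of 2] by (simp add: powr_realpow)
    ultimately have "488 * (real n + 1) ^ 6 \<le> 3 * real (card (mset_partitions n))"
      using elim(1) unfolding s_def by linarith
    then have "real (488 * (n + 1) ^ 6) \<le> real (3 * card (mset_partitions n))"
      by (simp add: add.commute)
    then show ?case
      by (simp only: of_nat_le_iff)
  qed
qed

lemma eventually_card_mset_partitions_le_twice:
  "\<forall>\<^sub>F n in sequentially. card (mset_partitions n) \<le> 2 * card (mset_partitions (n - 3))"
  using eventually_poly_le_card_mset_partitions eventually_ge_at_top[of 3]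
proof eventually_elim
  case (elim n)
  \<comment> \<open>Three steps of the recurrence give \<open>64 p(n) \<le> 125 p(n - 3) + 244 (n + 1)^6\<close>, and \<open>125 / 64 < 2\<close>.\<close>
  define X where "X = (n + 1) ^ 6"
  have step: "4 * card (mset_partitions (n - k)) \<le> 5 * card (mset_partitions (n - k - 1)) + 4 * X"
    if "k \<le> 2" for k
  proof -
    have "(n - k + 1) ^ 6 \<le> X"
      unfolding X_def by (rule power_mono) auto
    then show ?thesis
      using card_mset_partitions_recurrence[of "n - k"] that elim(2) by linarith
  qed
  have "n - 0 = n" "n - 1 - 1 = n - 2" "n - 2 - 1 = n - 3"
    by simp_all
  then show ?case
    using step[of 0] step[of 1] step[of 2] elim(1) unfolding X_def by simp
qed

lemma eventually_map_deg_bulgarian_ge_two: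
  "\<forall>\<^sub>F n in sequentially. 2 \<le> map_deg bulgarian (Part n) (Part n)"
  using eventually_card_mset_partitions_le_twice eventually_ge_at_top[of 3]
proof eventually_elim
  case (elim n)
  have "2 * card (mset_partitions n) \<le> card (collision_pairs bulgarian_mset (mset_partitions n))"
    using card_collision_pairs_bulgarian_mset_ge[OF elim(2)] elim(1) by linarith
  then have "real (2 * card (mset_partitions n))
      \<le> real (card (collision_pairs bulgarian_mset (mset_partitions n)))"
    by (simp only: of_nat_le_iff)
  then show ?case
    using card_mset_partitions_pos[of n] by (simp add: map_deg_bulgarian_eq le_divide_eq)
qed

theorem mainTheorem14:
  shows "liminf (\<lambda>n. ereal (map_deg bulgarian (Part n) (Part n))) \<ge> 2
       \<and> (\<forall>n::nat. n \<ge> 1 \<longrightarrow>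
           map_deg bulgarian (Part n) (Part n)
             \<le> of_int \<lfloor>(1 + sqrt (8 / 3 * real n + 1)) / 2\<rfloor>)"
proof
  show "liminf (\<lambda>n. ereal (map_deg bulgarian (Part n) (Part n))) \<ge> 2"
  proof (rule Liminf_bounded)
    show "\<forall>\<^sub>F n in sequentially. 2 \<le> ereal (map_deg bulgarian (Part n) (Part n))"
      using eventually_map_deg_bulgarian_ge_two by (rule eventually_mono) simp
  qed
  show "\<forall>n::nat. n \<ge> 1 \<longrightarrow> map_deg bulgarian (Part n) (Part n)
      \<le> of_int \<lfloor>(1 + sqrt (8 / 3 * real n + 1)) / 2\<rfloor>"
    using map_deg_bulgarian_le by blast
qed

end
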